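(* For every $t\le0$, the limit $\lim_{n\to\infty}\frac1n\log\mathbb{E}\big(e^{tH_n}\big)$ exists.
   Context: Standing setup (discrete-time Hawkes process, DTHP). Let $(a_i)_{i=0}^\infty$ be a sequence of strictly positive real numbers with $\sum_{i=0}^\infty a_i<1$ and $\sum_{i=1}^\infty i\,a_i<\infty$. The arrival process $\{\xi_n\}_{n\ge1}$ is a sequence of $\{0,1\}$-valued random variables on a probability space $(\Omega,\mathcal F,\mathbb P)$ with $\mathbb{P}(\xi_1=1)=a_0$, $\mathbb P(\xi_1=0)=1-a_0$, and for $n\ge2$, $$\mathbb{P}(\xi_n=1\mid \xi_1,\dots,\xi_{n-1})=a_0+\sum_{i=1}^{n-1}a_{n-i}\xi_i,\qquad \mathbb{P}(\xi_n=0\mid \xi_1,\dots,\xi_{n-1})=1-\Big(a_0+\sum_{i=1}^{n-1}a_{n-i}\xi_i\Big).$$ The DTHP is $H_n=\sum_{i=1}^n\xi_i$, and $\mathcal F_n=\sigma(\xi_1,\dots,\xi_n)$. *)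

theory Defs
  imports "HOL-Probability.Probability"
begin

text \<open>The arrivals are indexed from 1; the value
  of xi at index 0 is irrelevant. The conditional law of xi n given
  xi 1, ..., xi (n-1) (a discrete conditioning) is stated elementarily:
  for every 0/1-pattern x of the first n-1 arrivals,
  P(pattern x and xi n = 1) = (a 0 + sum a(n-i) x i) * P(pattern x).\<close>

definition dthp :: "'w measure \<Rightarrow> (nat \<Rightarrow> real) \<Rightarrow> (nat \<Rightarrow> 'w \<Rightarrow> real) \<Rightarrow> bool" where
  "dthp M a \<xi> \<longleftrightarrow>
     prob_space M \<and>
     (\<forall>n\<ge>1. \<xi> n \<in> borel_measurable M) \<and>
     (\<forall>n\<ge>1. \<forall>\<omega>\<in>space M. \<xi> n \<omega> \<in> {0, 1}) \<and>
     (\<forall>n\<ge>1. \<forall>x :: nat \<Rightarrow> real. (\<forall>i\<in>{1..<n}. x i \<in> {0, 1}) \<longrightarrow>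
        measure M {\<omega>\<in>space M. (\<forall>i\<in>{1..<n}. \<xi> i \<omega> = x i) \<and> \<xi> n \<omega> = 1}
        = (a 0 + (\<Sum>i=1..<n. a (n - i) * x i))
          * measure M {\<omega>\<in>space M. \<forall>i\<in>{1..<n}. \<xi> i \<omega> = x i})"

definition hawkes_H :: "(nat \<Rightarrow> 'w \<Rightarrow> real) \<Rightarrow> nat \<Rightarrow> 'w \<Rightarrow> real" where
  "hawkes_H \<xi> n \<omega> = (\<Sum>i=1..n. \<xi> i \<omega>)"

end

theory Submission
  imports Defs
begin

(* Conditioning on the first n arrivals turns E exp(t H_n) into a deterministic recursion:
   if past arrivals add the intensity b j to the j-th step ahead, the Laplace transform of the
   number of arrivals in the next m steps is a function W b m, and E exp(t H_n) = W 0 n.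
   For t <= 0, extra excitation can only decrease W, so W 0 (n + m) <= W 0 n * W 0 m.
   Together with W 0 n >= exp (t n), this makes ln (W 0 n) subadditive and bounded below by a
   linear function, and Fekete's lemma gives the limit. *)

lemma subadditive_mult_add:
  fixes g :: "nat \<Rightarrow> real"
  assumes "\<And>m n. g (m + n) \<le> g m + g n"
  shows "g (q * k + r) \<le> real q * g k + g r"
proof (induction q)
  case (Suc q)
  have "g (Suc q * k + r) = g (k + (q * k + r))" by (simp add: add.assoc)
  also have "\<dots> \<le> g k + g (q * k + r)" by (rule assms)
  also have "\<dots> \<le> real (Suc q) * g k + g r" using Suc by (simp add: algebra_simps)
  finally show ?case .
qed simp

lemma fekete_subadditive:
  fixes f :: "nat \<Rightarrow> real"
  assumes subadd: "\<And>m n. f (m + n) \<le> f m + f n" and lower: "\<And>n. c * real n \<le> f n"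
  shows "(\<lambda>n. f n / real n) \<longlonglongrightarrow> (INF n\<in>{1..}. f n / real n)"
proof -
  define L where "L = (INF n\<in>{1..}. f n / real n)"
  have bdd: "bdd_below ((\<lambda>n. f n / real n) ` {1..})"
    using lower by (intro bdd_belowI2[of _ c]) (simp add: pos_le_divide_eq)
  define g where "g n = f n - L * real n" for n
  have g_subadd: "g (m + n) \<le> g m + g n" for m n
    using subadd[of m n] by (simp add: g_def algebra_simps)
  have g_nonneg: "0 \<le> g n" for n
  proof (cases "n = 0")
    case True then show ?thesis using lower[of 0] by (simp add: g_def)
  next
    case False
    then have "L \<le> f n / real n" unfolding L_def using bdd by (intro cINF_lower) auto
    then show ?thesis using False by (simp add: g_def field_simps)
  qed
  have "(\<lambda>n. g n / real n) \<longlonglongrightarrow> 0"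
  proof (rule order_tendstoI)
    fix e :: real assume "0 < e"
    then have "L < L + e / 2" by simp
    then obtain k where k: "k \<ge> 1" "f k / real k < L + e / 2"
      unfolding L_def by (subst (asm) cINF_less_iff[OF _ bdd]) auto
    then have gk: "g k / real k < e / 2" by (simp add: g_def field_simps)
    define B where "B = (\<Sum>s<k. g s)"
    have "eventually (\<lambda>n. B / real n < e / 2) sequentially"
      using \<open>0 < e\<close> by (intro order_tendstoD(2)[OF lim_const_over_n]) simp
    then show "eventually (\<lambda>n. g n / real n < e) sequentially"
    proof (rule eventually_mono)
      fix n assume B: "B / real n < e / 2"
      have "g n \<le> real (n div k) * g k + g (n mod k)"
        using subadditive_mult_add[of g, OF g_subadd] by (metis div_mult_mod_eq)
      also have "\<dots> \<le> real n * (g k / real k) + B"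
      proof (rule add_mono)
        have "real (n div k) * g k = (real (n div k) * real k) * (g k / real k)"
          using k(1) by simp
        also have "\<dots> \<le> real n * (g k / real k)"
          using g_nonneg[of k]
          by (intro mult_right_mono) (simp_all flip: of_nat_mult)
        finally show "real (n div k) * g k \<le> real n * (g k / real k)" .
        show "g (n mod k) \<le> B"
          unfolding B_def using k(1) g_nonneg by (intro member_le_sum) auto
      qed
      finally have "g n \<le> real n * (g k / real k) + B" .
      then have "g n / real n \<le> g k / real k + B / real n" if "n > 0"
        using that by (simp add: field_simps)
      then show "g n / real n < e"
        using gk B \<open>0 < e\<close> by (cases "n = 0") (simp, linarith)
    qed
  qed (intro always_eventually allI less_le_trans[OF _ divide_nonneg_nonneg[OF g_nonneg]]; simp)
  then have "(\<lambda>n. g n / real n + L) \<longlonglongrightarrow> 0 + L" by (intro tendsto_add) auto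
  moreover have "eventually (\<lambda>n. g n / real n + L = f n / real n) sequentially"
    by (rule eventually_sequentiallyI[of 1]) (simp add: g_def field_simps)
  ultimately show ?thesis unfolding L_def by (simp add: tendsto_cong)
qed

lemma fekete_submultiplicative:
  fixes u :: "nat \<Rightarrow> real"
  assumes submult: "\<And>m n. u (m + n) \<le> u m * u n" and lower: "\<And>n. exp (c * real n) \<le> u n"
  shows "convergent (\<lambda>n. ln (u n) / real n)"
proof -
  have pos: "0 < u n" for n
    using lower[of n] by (rule less_le_trans[OF exp_gt_zero])
  have subadd: "ln (u (m + n)) \<le> ln (u m) + ln (u n)" for m n
    using submult[of m n] pos by (simp add: ln_mult_pos[symmetric])
  have ln_lower: "c * real n \<le> ln (u n)" for n
    using lower[of n] pos[of n] by (simp add: ln_ge_iff)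
  show ?thesis
    using fekete_subadditive[of "\<lambda>n. ln (u n)", OF subadd ln_lower] by (rule convergentI)
qed

definition tail_sum :: "(nat \<Rightarrow> real) \<Rightarrow> nat \<Rightarrow> real" where
  "tail_sum a j = (\<Sum>i. a (i + j))"

definition admissible :: "(nat \<Rightarrow> real) \<Rightarrow> (nat \<Rightarrow> real) \<Rightarrow> bool" where
  "admissible a b \<longleftrightarrow> (\<forall>j. 0 \<le> b j \<and> b j \<le> tail_sum a j)"

text \<open>cond_laplace a t b m is the conditional expectation of exp (t * (number of arrivals in
  the next m steps)) when past arrivals add the intensity b j to the j-th step ahead: the next
  step has an arrival with probability a 0 + b 1, and such an arrival adds a j to the intensity
  j steps after it.\<close>
fun cond_laplace :: "(nat \<Rightarrow> real) \<Rightarrow> real \<Rightarrow> (nat \<Rightarrow> real) \<Rightarrow> nat \<Rightarrow> real" where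
  "cond_laplace a t b 0 = 1"
| "cond_laplace a t b (Suc m) =
     (1 - (a 0 + b 1)) * cond_laplace a t (\<lambda>j. b (Suc j)) m
     + (a 0 + b 1) * exp t * cond_laplace a t (\<lambda>j. b (Suc j) + a j) m"

locale hawkes_kernel =
  fixes a :: "nat \<Rightarrow> real" and t :: real
  assumes kernel_nonneg: "\<And>i. 0 \<le> a i" and kernel_summable: "summable a"
    and kernel_sum_le_1: "(\<Sum>i. a i) \<le> 1" and t_nonpos: "t \<le> 0"
begin

abbreviation W :: "(nat \<Rightarrow> real) \<Rightarrow> nat \<Rightarrow> real" where
  "W \<equiv> cond_laplace a t"

lemma summable_kernel_shift: "summable (\<lambda>i. a (i + j))"
  using kernel_summable by (simp add: summable_iff_shift)

lemma tail_sum_Suc: "tail_sum a j = a j + tail_sum a (Suc j)"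
  using suminf_split_head[OF summable_kernel_shift] unfolding tail_sum_def by simp

lemma tail_sum_nonneg: "0 \<le> tail_sum a j"
  unfolding tail_sum_def using summable_kernel_shift kernel_nonneg by (intro suminf_nonneg)

lemma admissible_zero: "admissible a (\<lambda>_. 0)"
  by (simp add: admissible_def tail_sum_nonneg)

lemma admissible_arrival_prob:
  assumes "admissible a b"
  shows "0 \<le> a 0 + b 1" "a 0 + b 1 \<le> 1"
proof -
  show "0 \<le> a 0 + b 1" using assms kernel_nonneg[of 0] by (simp add: admissible_def)
  have "a 0 + b 1 \<le> tail_sum a 0"
    using assms tail_sum_Suc[of 0] by (simp add: admissible_def)
  also have "\<dots> \<le> 1" using kernel_sum_le_1 by (simp add: tail_sum_def)
  finally show "a 0 + b 1 \<le> 1" .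
qed

lemma admissible_shift:
  assumes "admissible a b"
  shows "admissible a (\<lambda>j. b (Suc j))" and "admissible a (\<lambda>j. b (Suc j) + a j)"
  using assms tail_sum_Suc kernel_nonneg unfolding admissible_def
  by (smt (verit, best))+

lemma cond_laplace_bounds:
  "admissible a b \<Longrightarrow> exp (t * real m) \<le> W b m \<and> W b m \<le> 1"
proof (induction m arbitrary: b)
  case (Suc m)
  define q where "q = a 0 + b 1"
  define A where "A = W (\<lambda>j. b (Suc j)) m"
  define B where "B = W (\<lambda>j. b (Suc j) + a j) m"
  have q: "0 \<le> q" "q \<le> 1" using admissible_arrival_prob[OF Suc.prems] by (auto simp: q_def)
  have A: "exp (t * real m) \<le> A" "A \<le> 1"
    using Suc.IH[OF admissible_shift(1)[OF Suc.prems]] by (auto simp: A_def)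
  have B: "exp (t * real m) \<le> B" "B \<le> 1"
    using Suc.IH[OF admissible_shift(2)[OF Suc.prems]] by (auto simp: B_def)
  have et: "exp t \<le> 1" using t_nonpos by simp
  have W: "W b (Suc m) = (1 - q) * A + q * (exp t * B)" by (simp add: q_def A_def B_def)
  have "exp (t * real (Suc m)) = (1 - q) * (exp t * exp (t * real m)) + q * (exp t * exp (t * real m))"
    by (simp add: algebra_simps flip: exp_add)
  also have "\<dots> \<le> (1 - q) * A + q * (exp t * B)"
    using q A B et by (intro add_mono mult_left_mono) (auto intro: order_trans[OF mult_left_le_one_le])
  finally have "exp (t * real (Suc m)) \<le> W b (Suc m)" unfolding W .
  moreover have "(1 - q) * A + q * (exp t * B) \<le> (1 - q) * 1 + q * (1 * 1)"
    using q A B et by (intro add_mono mult_left_mono mult_mono) (auto intro: order_trans[OF exp_ge_zero])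
  ultimately show ?case unfolding W by simp
qed simp

lemma cond_laplace_nonneg: "admissible a b \<Longrightarrow> 0 \<le> W b m"
  using cond_laplace_bounds by (meson exp_ge_zero order_trans)

lemma cond_laplace_antimono:
  "admissible a b \<Longrightarrow> admissible a b' \<Longrightarrow> (\<And>j. b j \<le> b' j) \<Longrightarrow> W b' m \<le> W b m"
proof (induction m arbitrary: b b')
  case (Suc m)
  define q where "q = a 0 + b 1"
  define A where "A = W (\<lambda>j. b (Suc j)) m"
  define B where "B = W (\<lambda>j. b (Suc j) + a j) m"
  define q' where "q' = a 0 + b' 1"
  define A' where "A' = W (\<lambda>j. b' (Suc j)) m"
  define B' where "B' = W (\<lambda>j. b' (Suc j) + a j) m"
  have q: "0 \<le> q" "q \<le> 1" using admissible_arrival_prob[OF Suc.prems(1)] by (auto simp: q_def)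
  have "q \<le> q'" using Suc.prems(3) by (simp add: q_def q'_def)
  note adm = admissible_shift[OF Suc.prems(1)] admissible_shift[OF Suc.prems(2)]
  have "A' \<le> A" unfolding A_def A'_def using Suc.prems(3) by (intro Suc.IH adm)
  have "B' \<le> B" unfolding B_def B'_def using Suc.prems(3) by (intro Suc.IH adm) (simp add: add_mono)
  txt \<open>The step is a q'-mixture of A' and exp t * B' \<le> A', so raising the arrival
    probability from q to q' can only lower it.\<close>
  have "B' \<le> A'" unfolding B'_def A'_def using kernel_nonneg by (intro Suc.IH adm) simp
  moreover have "0 \<le> B'" unfolding B'_def by (rule cond_laplace_nonneg[OF adm(4)])
  ultimately have "exp t * B' \<le> A'"
    using t_nonpos by (meson exp_le_one_iff exp_ge_zero mult_left_le_one_le order_trans)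
  then have "(q' - q) * (exp t * B') \<le> (q' - q) * A'"
    using \<open>q \<le> q'\<close> by (intro mult_left_mono) auto
  then have "(1 - q') * A' + q' * (exp t * B') \<le> (1 - q) * A' + q * (exp t * B')"
    by (simp add: algebra_simps)
  also have "\<dots> \<le> (1 - q) * A + q * (exp t * B)"
    using q \<open>A' \<le> A\<close> \<open>B' \<le> B\<close> by (intro add_mono mult_left_mono) auto
  finally show ?case by (simp add: q_def q'_def A_def B_def A'_def B'_def mult.assoc)
qed simp

lemma cond_laplace_submult: "admissible a b \<Longrightarrow> W b (n + m) \<le> W b n * W (\<lambda>_. 0) m"
proof (induction n arbitrary: b)
  case 0
  then show ?case
    using cond_laplace_antimono[OF admissible_zero 0] by (simp add: admissible_def)
next
  case (Suc n)
  define q where "q = a 0 + b 1"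
  have q: "0 \<le> q" "q \<le> 1" using admissible_arrival_prob[OF Suc.prems] by (auto simp: q_def)
  have "W b (Suc n + m) = (1 - q) * W (\<lambda>j. b (Suc j)) (n + m)
     + q * exp t * W (\<lambda>j. b (Suc j) + a j) (n + m)" by (simp add: q_def)
  also have "\<dots> \<le> (1 - q) * (W (\<lambda>j. b (Suc j)) n * W (\<lambda>_. 0) m)
     + q * exp t * (W (\<lambda>j. b (Suc j) + a j) n * W (\<lambda>_. 0) m)"
    using q Suc.IH[OF admissible_shift(1)[OF Suc.prems]] Suc.IH[OF admissible_shift(2)[OF Suc.prems]]
    by (intro add_mono mult_left_mono) auto
  also have "\<dots> = W b (Suc n) * W (\<lambda>_. 0) m" by (simp add: q_def algebra_simps)
  finally show ?case .
qed

end

locale dthp_process = hawkes_kernel a t for a t +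
  fixes M :: "'w measure" and \<xi> :: "nat \<Rightarrow> 'w \<Rightarrow> real"
  assumes hawkes: "dthp M a \<xi>"
begin

sublocale prob_space M
  using hawkes by (simp add: dthp_def)

abbreviation H :: "nat \<Rightarrow> 'w \<Rightarrow> real" where
  "H \<equiv> hawkes_H \<xi>"

definition cylinder :: "nat \<Rightarrow> (nat \<Rightarrow> real) \<Rightarrow> 'w set" where
  "cylinder n x = {\<omega>\<in>space M. \<forall>i\<in>{1..n}. \<xi> i \<omega> = x i}"

definition excitation :: "(nat \<Rightarrow> real) \<Rightarrow> nat \<Rightarrow> nat \<Rightarrow> real" where
  "excitation x n j = (\<Sum>i=1..n. a (n + j - i) * x i)"

lemma arrival_measurable: "1 \<le> i \<Longrightarrow> \<xi> i \<in> borel_measurable M"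
  using hawkes by (simp add: dthp_def)

lemma arrival_01: "1 \<le> i \<Longrightarrow> \<omega> \<in> space M \<Longrightarrow> \<xi> i \<omega> = 0 \<or> \<xi> i \<omega> = 1"
  using hawkes by (auto simp: dthp_def)

lemma H_measurable [measurable]: "H n \<in> borel_measurable M"
  unfolding hawkes_H_def[abs_def] by (intro borel_measurable_sum arrival_measurable) auto

lemma H_Suc: "H (Suc n) \<omega> = H n \<omega> + \<xi> (Suc n) \<omega>"
  by (simp add: hawkes_H_def)

lemma H_mono: "\<omega> \<in> space M \<Longrightarrow> H n \<omega> \<le> H (n + m) \<omega>"
proof (induction m)
  case (Suc m)
  then show ?case using arrival_01[of "Suc (n + m)" \<omega>] H_Suc[of "n + m" \<omega>] by auto
qed simp

lemma cylinder_sets [measurable]: "cylinder n x \<in> sets M"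
  unfolding cylinder_def
proof (intro sets.sets_Collect_finite_All)
  fix i assume "i \<in> {1..n}"
  then have [measurable]: "\<xi> i \<in> borel_measurable M" by (simp add: arrival_measurable)
  show "{\<omega> \<in> space M. \<xi> i \<omega> = x i} \<in> sets M" by measurable
qed simp

lemma cylinder_0: "cylinder 0 x = space M"
  by (simp add: cylinder_def)

lemma cylinder_Suc:
  "cylinder (Suc n) (x(Suc n := v)) = {\<omega>\<in>cylinder n x. \<xi> (Suc n) \<omega> = v}"
  unfolding cylinder_def by (auto simp: atLeastAtMostSuc_conv)

lemma arrival_law:
  assumes "1 \<le> n" and "\<forall>i\<in>{1..<n}. x i \<in> {0, 1}"
  shows "measure M {\<omega>\<in>space M. (\<forall>i\<in>{1..<n}. \<xi> i \<omega> = x i) \<and> \<xi> n \<omega> = 1}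
    = (a 0 + (\<Sum>i=1..<n. a (n - i) * x i)) * measure M {\<omega>\<in>space M. \<forall>i\<in>{1..<n}. \<xi> i \<omega> = x i}"
  using hawkes assms unfolding dthp_def by (elim conjE allE impE) auto

lemma measure_cylinder_arrival:
  assumes "\<forall>i\<in>{1..n}. x i \<in> {0, 1}"
  shows "measure M (cylinder (Suc n) (x(Suc n := 1))) = (a 0 + excitation x n 1) * measure M (cylinder n x)"
proof -
  have "\<forall>i\<in>{1..<Suc n}. x i \<in> {0, 1}"
    using assms by (simp add: atLeastLessThanSuc_atLeastAtMost)
  from arrival_law[of "Suc n" x, OF _ this] show ?thesis
    unfolding cylinder_Suc by (simp add: cylinder_def excitation_def atLeastLessThanSuc_atLeastAtMost)
qed

lemma measure_cylinder_no_arrival: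
  assumes "\<forall>i\<in>{1..n}. x i \<in> {0, 1}"
  shows "measure M (cylinder (Suc n) (x(Suc n := 0))) = (1 - (a 0 + excitation x n 1)) * measure M (cylinder n x)"
proof -
  have "cylinder n x = cylinder (Suc n) (x(Suc n := 0)) \<union> cylinder (Suc n) (x(Suc n := 1))"
    unfolding cylinder_Suc using arrival_01[of "Suc n"] by (auto simp: cylinder_def)
  moreover have "cylinder (Suc n) (x(Suc n := 0)) \<inter> cylinder (Suc n) (x(Suc n := 1)) = {}"
    by (auto simp: cylinder_Suc)
  ultimately have "measure M (cylinder n x)
      = measure M (cylinder (Suc n) (x(Suc n := 0))) + measure M (cylinder (Suc n) (x(Suc n := 1)))"
    by (simp add: finite_measure_Union)
  then show ?thesis using measure_cylinder_arrival[OF assms] by (simp add: algebra_simps)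
qed

lemma excitation_update:
  "excitation (x(Suc n := v)) (Suc n) = (\<lambda>j. excitation x n (Suc j) + a j * v)"
proof (rule ext)
  fix j
  have "(\<Sum>i=1..n. a (Suc n + j - i) * (x(Suc n := v)) i) = (\<Sum>i=1..n. a (n + Suc j - i) * x i)"
    by (intro sum.cong) auto
  then show "excitation (x(Suc n := v)) (Suc n) j = excitation x n (Suc j) + a j * v"
    by (simp add: excitation_def)
qed

lemma excitation_0: "excitation x 0 = (\<lambda>_. 0)"
  by (simp add: excitation_def[abs_def])

lemma integrable_cylinder_increment:
  "integrable M (\<lambda>\<omega>. indicator (cylinder n x) \<omega> * exp (t * (H (n + m) \<omega> - H n \<omega>)))"
proof (rule integrable_const_bound[where B=1])
  show "AE \<omega> in M. norm (indicator (cylinder n x) \<omega> * exp (t * (H (n + m) \<omega> - H n \<omega>))) \<le> 1"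
  proof (rule AE_I2)
    fix \<omega> assume "\<omega> \<in> space M"
    then have "t * (H (n + m) \<omega> - H n \<omega>) \<le> 0"
      using H_mono t_nonpos by (simp add: mult_nonpos_nonneg)
    then show "norm (indicator (cylinder n x) \<omega> * exp (t * (H (n + m) \<omega> - H n \<omega>))) \<le> 1"
      by (simp add: indicator_def)
  qed
qed measurable

text \<open>The Markov property behind the recursion: given the first n arrivals, the law of the
  future depends on them only through their excitation.\<close>
lemma integral_cylinder_increment:
  "\<forall>i\<in>{1..n}. x i \<in> {0, 1} \<Longrightarrow>
   (\<integral>\<omega>. indicator (cylinder n x) \<omega> * exp (t * (H (n + m) \<omega> - H n \<omega>)) \<partial>M)
     = measure M (cylinder n x) * W (excitation x n) m"
proof (induction m arbitrary: n x)
  case 0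
  then show ?case by (simp add: Int_absorb2 sets.sets_into_space)
next
  case (Suc m)
  define x0 where "x0 = x(Suc n := 0)"
  define x1 where "x1 = x(Suc n := 1)"
  have x0: "\<forall>i\<in>{1..Suc n}. x0 i \<in> {0, 1}" and x1: "\<forall>i\<in>{1..Suc n}. x1 i \<in> {0, 1}"
    using Suc.prems by (auto simp: x0_def x1_def)
  define f where "f \<omega> = exp (t * (H (Suc n + m) \<omega> - H (Suc n) \<omega>))" for \<omega>
  have split_next: "indicator (cylinder n x) \<omega> * exp (t * (H (n + Suc m) \<omega> - H n \<omega>))
      = indicator (cylinder (Suc n) x0) \<omega> * f \<omega> + exp t * (indicator (cylinder (Suc n) x1) \<omega> * f \<omega>)"
    if "\<omega> \<in> space M" for \<omega>
  proof -
    have "exp (t * (H (n + Suc m) \<omega> - H n \<omega>)) = exp (t * \<xi> (Suc n) \<omega>) * f \<omega>"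
      using H_Suc[of n \<omega>] by (simp add: f_def algebra_simps flip: exp_add)
    then show ?thesis
      unfolding x0_def x1_def cylinder_Suc
      using arrival_01[of "Suc n" \<omega>] that by (auto simp: indicator_def)
  qed
  have "(\<integral>\<omega>. indicator (cylinder n x) \<omega> * exp (t * (H (n + Suc m) \<omega> - H n \<omega>)) \<partial>M)
      = (\<integral>\<omega>. indicator (cylinder (Suc n) x0) \<omega> * f \<omega>
            + exp t * (indicator (cylinder (Suc n) x1) \<omega> * f \<omega>) \<partial>M)"
    by (rule Bochner_Integration.integral_cong[OF refl split_next])
  also have "\<dots> = (\<integral>\<omega>. indicator (cylinder (Suc n) x0) \<omega> * f \<omega> \<partial>M)
        + exp t * (\<integral>\<omega>. indicator (cylinder (Suc n) x1) \<omega> * f \<omega> \<partial>M)"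
    using integrable_cylinder_increment[of "Suc n" x0 m] integrable_cylinder_increment[of "Suc n" x1 m]
    unfolding f_def by (subst Bochner_Integration.integral_add) auto
  also have "\<dots> = measure M (cylinder (Suc n) x0) * W (excitation x0 (Suc n)) m
      + exp t * (measure M (cylinder (Suc n) x1) * W (excitation x1 (Suc n)) m)"
    unfolding f_def using Suc.IH[OF x0] Suc.IH[OF x1] by simp
  also have "\<dots> = measure M (cylinder n x) * W (excitation x n) (Suc m)"
    unfolding x0_def x1_def excitation_update
      measure_cylinder_no_arrival[OF Suc.prems] measure_cylinder_arrival[OF Suc.prems]
    by (simp add: algebra_simps)
  finally show ?case .
qed

lemma expectation_exp_H: "(\<integral>\<omega>. exp (t * H m \<omega>) \<partial>M) = W (\<lambda>_. 0) m"
proof -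
  have "(\<integral>\<omega>. exp (t * H m \<omega>) \<partial>M)
      = (\<integral>\<omega>. indicator (cylinder 0 (\<lambda>_. 0)) \<omega> * exp (t * (H (0 + m) \<omega> - H 0 \<omega>)) \<partial>M)"
    by (intro Bochner_Integration.integral_cong) (auto simp: cylinder_0 hawkes_H_def)
  also have "\<dots> = W (\<lambda>_. 0) m"
    by (subst integral_cylinder_increment) (auto simp: cylinder_0 excitation_0 prob_space)
  finally show ?thesis .
qed

end

theorem lemma4p6:
  fixes M :: "'w measure" and a :: "nat \<Rightarrow> real" and \<xi> :: "nat \<Rightarrow> 'w \<Rightarrow> real" and t :: real
  assumes a_pos: "\<And>i. a i > 0"
    and a_summable: "summable a" and a_sum: "(\<Sum>i. a i) < 1"
    and a_moment: "summable (\<lambda>i. real i * a i)"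
    and hawkes: "dthp M a \<xi>"
    and t_nonpos: "t \<le> 0"
  shows "convergent (\<lambda>n. ln (\<integral>\<omega>. exp (t * hawkes_H \<xi> n \<omega>) \<partial>M) / real n)"
proof -
  interpret dthp_process a t M \<xi>
    by unfold_locales (use a_pos a_summable a_sum hawkes t_nonpos in \<open>auto intro: less_imp_le\<close>)
  have "convergent (\<lambda>n. ln (W (\<lambda>_. 0) n) / real n)"
    using cond_laplace_submult[OF admissible_zero] cond_laplace_bounds[OF admissible_zero]
    by (intro fekete_submultiplicative[of _ t]) auto
  then show ?thesis
    by (simp add: expectation_exp_H)
qed

end
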